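(* Let $u,w$ be words over $\{L,R\}$ such that $w$ starts with $R$ and $Ru$ is a tail of $w$. Then $LRu$ is reduced from $Lw$.
   Context: Words are finite strings (including the empty word) over $\{L,R\}$. A tail of $w$ is any word $v'$ with $w=vv'$ for some word $v$. A word $u$ is reduced from $w$ if it is obtained from $w$ by finitely many (possibly zero) successive applications of the reduction rules, where $v,v'$ are arbitrary words: (1) $vRRv'\Rightarrow vRv'$; (1') $vLLv'\Rightarrow vLv'$; (2) $vLRv'\Rightarrow vv'$; (2') $vRLv'\Rightarrow vv'$. *)

theory Defs
  imports Main
begin

datatype letter = L | R

type_synonym word = "letter list"

definition is_tail :: "word \<Rightarrow> word \<Rightarrow> bool" where
  "is_tail t w \<longleftrightarrow> (\<exists>v. w = v @ t)"

inductive red_step :: "word \<Rightarrow> word \<Rightarrow> bool" where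
  rule1:  "red_step (v @ [R, R] @ v') (v @ [R] @ v')"
| rule1': "red_step (v @ [L, L] @ v') (v @ [L] @ v')"
| rule2:  "red_step (v @ [L, R] @ v') (v @ v')"
| rule2': "red_step (v @ [R, L] @ v') (v @ v')"

definition reduced_from :: "word \<Rightarrow> word \<Rightarrow> bool" where
  "reduced_from u w \<longleftrightarrow> red_step\<^sup>*\<^sup>* w u"

end

theory Submission
  imports Defs
begin

text \<open>Every word reduces to a word of length at most one. Unless \<open>w = R u\<close>, write \<open>w = R x R u\<close>; the
  factor \<open>x\<close> therefore collapses to \<open>[]\<close>, \<open>L\<close> or \<open>R\<close>, and each of \<open>RR\<close>, \<open>RLR\<close>, \<open>RRR\<close>
  reduces to \<open>R\<close>; the leading \<open>L\<close> is just carried along as context.\<close>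

lemma red_step_in_context:
  assumes "red_step x y"
  shows "red_step (p @ x @ q) (p @ y @ q)"
  using assms
proof induction
  case (rule1 v v')
  show ?case using red_step.rule1[of "p @ v" "v' @ q"] by simp
next
  case (rule1' v v')
  show ?case using red_step.rule1'[of "p @ v" "v' @ q"] by simp
next
  case (rule2 v v')
  show ?case using red_step.rule2[of "p @ v" "v' @ q"] by simp
next
  case (rule2' v v')
  show ?case using red_step.rule2'[of "p @ v" "v' @ q"] by simp
qed

lemma red_steps_in_context:
  assumes "red_step\<^sup>*\<^sup>* x y"
  shows "red_step\<^sup>*\<^sup>* (p @ x @ q) (p @ y @ q)"
  using assms
  by induction (auto intro: rtranclp.rtrancl_into_rtrancl red_step_in_context)

lemma red_step_two_letters: "\<exists>m. length m \<le> 1 \<and> red_step [a, b] m"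
proof -
  have "red_step [R, R] [R]" "red_step [L, L] [L]" "red_step [L, R] []" "red_step [R, L] []"
    using red_step.rule1[of "[]" "[]"] red_step.rule1'[of "[]" "[]"]
      red_step.rule2[of "[]" "[]"] red_step.rule2'[of "[]" "[]"] by simp_all
  then show ?thesis
    by (cases a; cases b) (auto intro: exI[of _ "[]"] exI[of _ "[L]"] exI[of _ "[R]"])
qed

lemma reduces_to_length_le_1: "\<exists>n. length n \<le> 1 \<and> red_step\<^sup>*\<^sup>* x n"
proof (induction x)
  case Nil
  show ?case by (intro exI[of _ "[]"]) simp
next
  case (Cons a x)
  then obtain n where n: "length n \<le> 1" "red_step\<^sup>*\<^sup>* x n" by blast
  have to_a_n: "red_step\<^sup>*\<^sup>* (a # x) (a # n)"
    using red_steps_in_context[OF n(2), where p = "[a]" and q = "[]"] by simp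
  show ?case
  proof (cases n)
    case Nil
    then show ?thesis using to_a_n by (intro exI[of _ "[a]"]) simp
  next
    case (Cons b t)
    with n(1) have "a # n = [a, b]" by simp
    then obtain m where "length m \<le> 1" "red_step (a # n) m"
      using red_step_two_letters by metis
    then show ?thesis using to_a_n by (meson rtranclp.rtrancl_into_rtrancl)
  qed
qed

lemma R_word_R_reduces_to_R: "red_step\<^sup>*\<^sup>* (R # x @ [R]) [R]"
proof -
  obtain n where n: "length n \<le> 1" "red_step\<^sup>*\<^sup>* x n"
    using reduces_to_length_le_1 by blast
  have to_RnR: "red_step\<^sup>*\<^sup>* (R # x @ [R]) (R # n @ [R])"
    using red_steps_in_context[OF n(2), where p = "[R]" and q = "[R]"] by simp
  have RR: "red_step [R, R] [R]"
    using red_step.rule1[of "[]" "[]"] by simp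
  have "red_step\<^sup>*\<^sup>* (R # n @ [R]) [R]"
  proof (cases n)
    case Nil
    then show ?thesis using RR by simp
  next
    case (Cons b t)
    with n(1) have "n = [b]" by simp
    moreover have "red_step [R, L, R] [R]"
      using red_step.rule2'[of "[]" "[R]"] by simp
    moreover have "red_step [R, R, R] [R, R]"
      using red_step.rule1[of "[]" "[R]"] by simp
    ultimately show ?thesis
      using RR by (cases b) (auto intro: converse_rtranclp_into_rtranclp)
  qed
  with to_RnR show ?thesis by (rule rtranclp_trans)
qed

theorem mainTheorem7:
  fixes u w :: word
  assumes "w \<noteq> [] \<and> hd w = R"
    and "is_tail (R # u) w"
  shows "reduced_from (L # R # u) (L # w)"
proof -
  obtain v where w: "w = v @ R # u"
    using assms(2) unfolding is_tail_def by blast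
  show ?thesis
  proof (cases v)
    case Nil
    then show ?thesis using w unfolding reduced_from_def by simp
  next
    case (Cons a x)
    with w assms(1) have "L # w = [L] @ (R # x @ [R]) @ u" by simp
    then show ?thesis
      using red_steps_in_context[OF R_word_R_reduces_to_R[of x], where p = "[L]" and q = u]
      unfolding reduced_from_def by simp
  qed
qed

end
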